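(* Every set $SQ$ of priority derivation steps of stack-queue type is specialisation independent: whenever $Ds_1,Ds_2\in SQ$ and $Ds_2$ is a lowering of $Ds_1$ by a p-goal $X$, then $Ds_2$ is a congruent lowering of $Ds_1$ by $X$. Consequently every complete set of stack-queue type is a specialisation independent scheduling rule.
   Context: A p-atom is a pair $a[p]$ of an atom $a$ and a rational priority $p$. A p-goal is a finite set of p-atoms with pairwise distinct priorities, regarded as a list ordered by increasing priority. Substitutions act on atoms and leave priorities unchanged. A clause is $h\leftarrow B$ with $h$ an atom and $B$ a p-goal. For p-goals with no common priority, $F+G=F\cup G$; $F|G$ denotes $F+G$ when all priorities of $F$ are smaller than those of $G$. A shifting $\underline{\pi}$ is a strictly increasing bijection $\mathbb{Q}\to\mathbb{Q}$ acting on priorities ($G\underline\pi$). Priority derivation step: for a p-goal $a|F$ ($a$ of least priority), clause $c=(h\leftarrow B)$, renaming $\xi$ with $var(a|F)\cap var(c\xi)=\emptyset$, idempotent relevant mgu $\theta$ of $a$ and $h\xi$, shifting $\underline{\pi}$ with $F$, $B\xi\underline{\pi}$ sharing no priority: $a|F\xrightarrow{c\xi,\theta}(F+B\xi\underline{\pi})\theta$. Lowering: for $c=(h\leftarrow B)$, a step $a\lambda\underline{\sigma}|(K\lambda\underline{\sigma}+X)\xrightarrow{c}(X+K\lambda\underline{\sigma}+B\xi''\underline{\theta}'')\alpha''$ is a lowering by $X$ of a step $a|K\xrightarrow{c}(K+B\xi'\underline{\theta}')\alpha'$ ($\lambda$ a substitution, $\underline\sigma$ a shifting); it is a congruent lowering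 by $X$ if some shifting $\underline{\rho}$ has $K\underline{\rho}=K\underline{\sigma}$ and $B\underline{\theta}'\underline{\rho}=B\underline{\theta}''$. Steps are (congruent) lowerings of each other if each is a (congruent) lowering of the other. A set $S$ of steps is complete if (i) whenever some step $G\xrightarrow{c}\cdot$ exists, some step $G\xrightarrow{c}\cdot$ lies in $S$, and (ii) $S$ contains every step that is a congruent lowering of each other with a step of $S$; deterministic if two steps of $S$ that are lowerings of each other are congruent lowerings of each other; specialisation independent as in the claim. A scheduling rule is a complete deterministic set; a specialisation independent scheduling rule is a complete specialisation independent set. Stack-queue type: a set $SQ$ of priority derivation steps is of stack-queue type if for every clause $c=(h\leftarrow B)$ there are p-goals $M_s,M_q$ with $B=M_s|M_q$ such that every step $a|K\xrightarrow{c\xi,\mu}R$ in $SQ$ satisfies $R=(M_s\xi\underline{\gamma}|K|M_q\xi\underline{\gamma})\mu$ for some shifting $\underline{\gamma}$. *)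

theory Defs
  imports Complex_Main
begin

datatype ('f, 'v) trm = Var 'v | Fn 'f "('f, 'v) trm list"

type_synonym ('f, 'v) subst = "'v \<Rightarrow> ('f, 'v) trm"

fun subst_trm :: "('f, 'v) trm \<Rightarrow> ('f, 'v) subst \<Rightarrow> ('f, 'v) trm" where
  "subst_trm (Var x) \<sigma> = \<sigma> x"
| "subst_trm (Fn f ts) \<sigma> = Fn f (map (\<lambda>t. subst_trm t \<sigma>) ts)"

fun vars_trm :: "('f, 'v) trm \<Rightarrow> 'v set" where
  "vars_trm (Var x) = {x}"
| "vars_trm (Fn f ts) = \<Union> (set (map vars_trm ts))"

definition subst_comp :: "('f, 'v) subst \<Rightarrow> ('f, 'v) subst \<Rightarrow> ('f, 'v) subst" where
  "subst_comp \<sigma> \<tau> = (\<lambda>x. subst_trm (\<sigma> x) \<tau>)"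

datatype ('p, 'f, 'v) atom = Atom 'p "('f, 'v) trm list"

fun subst_atom :: "('p, 'f, 'v) atom \<Rightarrow> ('f, 'v) subst \<Rightarrow> ('p, 'f, 'v) atom" where
  "subst_atom (Atom P ts) \<sigma> = Atom P (map (\<lambda>t. subst_trm t \<sigma>) ts)"

fun vars_atom :: "('p, 'f, 'v) atom \<Rightarrow> 'v set" where
  "vars_atom (Atom P ts) = \<Union> (set (map vars_trm ts))"

definition subst_dom :: "('f, 'v) subst \<Rightarrow> 'v set" where
  "subst_dom \<theta> = {x. \<theta> x \<noteq> Var x}"

definition subst_range_vars :: "('f, 'v) subst \<Rightarrow> 'v set" where
  "subst_range_vars \<theta> = (\<Union>x\<in>subst_dom \<theta>. vars_trm (\<theta> x))"

definition renaming :: "('f, 'v) subst \<Rightarrow> bool" where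
  "renaming \<xi> \<longleftrightarrow> (\<exists>f. bij f \<and> \<xi> = (\<lambda>x. Var (f x)))"

definition unifier :: "('f, 'v) subst \<Rightarrow> ('p, 'f, 'v) atom \<Rightarrow> ('p, 'f, 'v) atom \<Rightarrow> bool" where
  "unifier \<theta> A A' \<longleftrightarrow> subst_atom A \<theta> = subst_atom A' \<theta>"

definition mgu :: "('f, 'v) subst \<Rightarrow> ('p, 'f, 'v) atom \<Rightarrow> ('p, 'f, 'v) atom \<Rightarrow> bool" where
  "mgu \<theta> A A' \<longleftrightarrow> unifier \<theta> A A' \<and> (\<forall>\<tau>. unifier \<tau> A A' \<longrightarrow> (\<exists>\<delta>. \<tau> = subst_comp \<theta> \<delta>))"

definition idem_relevant_mgu :: "('f, 'v) subst \<Rightarrow> ('p, 'f, 'v) atom \<Rightarrow> ('p, 'f, 'v) atom \<Rightarrow> bool" where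
  "idem_relevant_mgu \<theta> A A' \<longleftrightarrow> mgu \<theta> A A' \<and> subst_comp \<theta> \<theta> = \<theta>
     \<and> subst_dom \<theta> \<union> subst_range_vars \<theta> \<subseteq> vars_atom A \<union> vars_atom A'"

type_synonym ('p, 'f, 'v) patom = "('p, 'f, 'v) atom \<times> rat"
type_synonym ('p, 'f, 'v) pgoal = "('p, 'f, 'v) patom set"
type_synonym ('p, 'f, 'v) clause = "('p, 'f, 'v) atom \<times> ('p, 'f, 'v) pgoal"

definition prios :: "('p, 'f, 'v) pgoal \<Rightarrow> rat set" where
  "prios G = snd ` G"

definition pgoal :: "('p, 'f, 'v) pgoal \<Rightarrow> bool" where
  "pgoal G \<longleftrightarrow> finite G \<and> inj_on snd G"

text \<open>F and G share no priority (the side condition of F + G = F \<union> G).\<close>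
definition no_common :: "('p, 'f, 'v) pgoal \<Rightarrow> ('p, 'f, 'v) pgoal \<Rightarrow> bool" where
  "no_common F G \<longleftrightarrow> prios F \<inter> prios G = {}"

text \<open>All priorities of F are smaller than those of G (side condition of F|G = F \<union> G).\<close>
definition before :: "('p, 'f, 'v) pgoal \<Rightarrow> ('p, 'f, 'v) pgoal \<Rightarrow> bool" where
  "before F G \<longleftrightarrow> (\<forall>p\<in>prios F. \<forall>q\<in>prios G. p < q)"

definition subst_pg :: "('p, 'f, 'v) pgoal \<Rightarrow> ('f, 'v) subst \<Rightarrow> ('p, 'f, 'v) pgoal" where
  "subst_pg G \<sigma> = (\<lambda>(A, p). (subst_atom A \<sigma>, p)) ` G"

definition shifting :: "(rat \<Rightarrow> rat) \<Rightarrow> bool" where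
  "shifting \<pi> \<longleftrightarrow> strict_mono \<pi> \<and> bij \<pi>"

definition shift_pg :: "('p, 'f, 'v) pgoal \<Rightarrow> (rat \<Rightarrow> rat) \<Rightarrow> ('p, 'f, 'v) pgoal" where
  "shift_pg G \<pi> = (\<lambda>(A, p). (A, \<pi> p)) ` G"

definition vars_pg :: "('p, 'f, 'v) pgoal \<Rightarrow> 'v set" where
  "vars_pg G = (\<Union>(A, p)\<in>G. vars_atom A)"

definition subst_clause :: "('p, 'f, 'v) clause \<Rightarrow> ('f, 'v) subst \<Rightarrow> ('p, 'f, 'v) clause" where
  "subst_clause c \<xi> = (subst_atom (fst c) \<xi>, subst_pg (snd c) \<xi>)"

definition vars_clause :: "('p, 'f, 'v) clause \<Rightarrow> 'v set" where
  "vars_clause c = vars_atom (fst c) \<union> vars_pg (snd c)"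

text \<open>A step  G --(c\<xi>,\<theta>)--> R  records the goal, the (unrenamed) clause c, the renaming \<xi>,
  the shifting \<pi> used, the mgu \<theta> and the resulting p-goal.\<close>
record ('p, 'f, 'v) pstep =
  st_goal   :: "('p, 'f, 'v) pgoal"
  st_clause :: "('p, 'f, 'v) clause"
  st_ren    :: "('f, 'v) subst"
  st_shift  :: "rat \<Rightarrow> rat"
  st_mgu    :: "('f, 'v) subst"
  st_res    :: "('p, 'f, 'v) pgoal"

definition is_step :: "('p, 'f, 'v) pstep \<Rightarrow> bool" where
  "is_step D \<longleftrightarrow>
     (\<exists>a F. st_goal D = insert a F \<and> pgoal F \<and> before {a} F
        \<and> pgoal (snd (st_clause D))
        \<and> renaming (st_ren D)
        \<and> vars_pg (st_goal D) \<inter> vars_clause (subst_clause (st_clause D) (st_ren D)) = {}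
        \<and> idem_relevant_mgu (st_mgu D) (fst a) (subst_atom (fst (st_clause D)) (st_ren D))
        \<and> shifting (st_shift D)
        \<and> no_common F (shift_pg (subst_pg (snd (st_clause D)) (st_ren D)) (st_shift D))
        \<and> st_res D = subst_pg (F \<union> shift_pg (subst_pg (snd (st_clause D)) (st_ren D)) (st_shift D))
                        (st_mgu D))"

text \<open>Here \<xi>', \<theta>', \<alpha>' (resp. \<xi>'', \<theta>'', \<alpha>'') are the renaming, shifting and mgu of D1 (resp. D2).\<close>
definition lowering_wit ::
  "('p, 'f, 'v) pstep \<Rightarrow> ('p, 'f, 'v) pstep \<Rightarrow> ('p, 'f, 'v) pgoal
   \<Rightarrow> ('p, 'f, 'v) patom \<Rightarrow> ('p, 'f, 'v) pgoal \<Rightarrow> ('f, 'v) subst \<Rightarrow> (rat \<Rightarrow> rat) \<Rightarrow> bool" where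
  "lowering_wit D1 D2 X a K lam \<sigma> \<longleftrightarrow>
     (let c = st_clause D1; B = snd c;
          a' = (subst_atom (fst a) lam, \<sigma> (snd a));
          K' = shift_pg (subst_pg K lam) \<sigma>;
          B1 = shift_pg (subst_pg B (st_ren D1)) (st_shift D1);
          B2 = shift_pg (subst_pg B (st_ren D2)) (st_shift D2)
      in st_clause D2 = c \<and> pgoal X \<and> pgoal K \<and> shifting \<sigma>
         \<and> st_goal D1 = insert a K \<and> before {a} K
         \<and> no_common K' X \<and> before {a'} (K' \<union> X) \<and> st_goal D2 = insert a' (K' \<union> X)
         \<and> no_common K B1 \<and> st_res D1 = subst_pg (K \<union> B1) (st_mgu D1)
         \<and> no_common (X \<union> K') B2 \<and> st_res D2 = subst_pg (X \<union> K' \<union> B2) (st_mgu D2))"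

definition lowering :: "('p, 'f, 'v) pstep \<Rightarrow> ('p, 'f, 'v) pstep \<Rightarrow> ('p, 'f, 'v) pgoal \<Rightarrow> bool" where
  "lowering D1 D2 X \<longleftrightarrow> (\<exists>a K lam \<sigma>. lowering_wit D1 D2 X a K lam \<sigma>)"

definition cong_lowering :: "('p, 'f, 'v) pstep \<Rightarrow> ('p, 'f, 'v) pstep \<Rightarrow> ('p, 'f, 'v) pgoal \<Rightarrow> bool" where
  "cong_lowering D1 D2 X \<longleftrightarrow>
     (\<exists>a K lam \<sigma>. lowering_wit D1 D2 X a K lam \<sigma>
        \<and> (\<exists>\<rho>. shifting \<rho> \<and> shift_pg K \<rho> = shift_pg K \<sigma>
               \<and> shift_pg (shift_pg (snd (st_clause D1)) (st_shift D1)) \<rho>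
                   = shift_pg (snd (st_clause D1)) (st_shift D2)))"

definition mutual_lowering :: "('p, 'f, 'v) pstep \<Rightarrow> ('p, 'f, 'v) pstep \<Rightarrow> bool" where
  "mutual_lowering D1 D2 \<longleftrightarrow> (\<exists>X. lowering D1 D2 X) \<and> (\<exists>Y. lowering D2 D1 Y)"

definition mutual_cong_lowering :: "('p, 'f, 'v) pstep \<Rightarrow> ('p, 'f, 'v) pstep \<Rightarrow> bool" where
  "mutual_cong_lowering D1 D2 \<longleftrightarrow> (\<exists>X. cong_lowering D1 D2 X) \<and> (\<exists>Y. cong_lowering D2 D1 Y)"

definition complete :: "('p, 'f, 'v) pstep set \<Rightarrow> bool" where
  "complete S \<longleftrightarrow>
     (\<forall>G c. (\<exists>D. is_step D \<and> st_goal D = G \<and> st_clause D = c)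
              \<longrightarrow> (\<exists>D\<in>S. st_goal D = G \<and> st_clause D = c))
   \<and> (\<forall>D'\<in>S. \<forall>D. is_step D \<and> mutual_cong_lowering D D' \<longrightarrow> D \<in> S)"

definition deterministic :: "('p, 'f, 'v) pstep set \<Rightarrow> bool" where
  "deterministic S \<longleftrightarrow> (\<forall>D1\<in>S. \<forall>D2\<in>S. mutual_lowering D1 D2 \<longrightarrow> mutual_cong_lowering D1 D2)"

definition spec_independent :: "('p, 'f, 'v) pstep set \<Rightarrow> bool" where
  "spec_independent S \<longleftrightarrow>
     (\<forall>D1\<in>S. \<forall>D2\<in>S. \<forall>X. lowering D1 D2 X \<longrightarrow> cong_lowering D1 D2 X)"

definition scheduling_rule :: "('p, 'f, 'v) pstep set \<Rightarrow> bool" where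
  "scheduling_rule S \<longleftrightarrow> complete S \<and> deterministic S"

definition spec_indep_scheduling_rule :: "('p, 'f, 'v) pstep set \<Rightarrow> bool" where
  "spec_indep_scheduling_rule S \<longleftrightarrow> complete S \<and> spec_independent S"

definition stack_queue_type :: "('p, 'f, 'v) pstep set \<Rightarrow> bool" where
  "stack_queue_type SQ \<longleftrightarrow>
     (\<forall>c :: ('p, 'f, 'v) clause. pgoal (snd c) \<longrightarrow>
        (\<exists>Ms Mq. pgoal Ms \<and> pgoal Mq \<and> before Ms Mq \<and> snd c = Ms \<union> Mq
          \<and> (\<forall>D\<in>SQ. \<forall>a K. st_clause D = c \<and> st_goal D = insert a K \<and> before {a} K \<longrightarrow>
               (\<exists>\<gamma>. shifting \<gamma>
                  \<and> before (shift_pg (subst_pg Ms (st_ren D)) \<gamma>) K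
                  \<and> before K (shift_pg (subst_pg Mq (st_ren D)) \<gamma>)
                  \<and> before (shift_pg (subst_pg Ms (st_ren D)) \<gamma>) (shift_pg (subst_pg Mq (st_ren D)) \<gamma>)
                  \<and> st_res D = subst_pg (shift_pg (subst_pg Ms (st_ren D)) \<gamma> \<union> K
                                         \<union> shift_pg (subst_pg Mq (st_ren D)) \<gamma>) (st_mgu D)))))"

end

theory Submission
  imports Defs
begin

(* In a stack-queue step with goal a|K the body priorities straddle K: the stack part is shifted
  below K and the queue part above. This holds for the shifting \<pi> the step actually uses, not only
  for the witness \<gamma> of the definition, because \<pi> and \<gamma> are strictly increasing and map the finite
  set of body priorities onto the same set (the priorities of the result that are not in K), so they
  agree on it. Hence if D\<^sub>2 lowers D\<^sub>1 with shiftings \<pi>\<^sub>1, \<pi>\<^sub>2, the map that is \<sigma> on the priorities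
  of K and \<pi>\<^sub>2 \<circ> inv \<pi>\<^sub>1 on the shifted body of D\<^sub>1 is strictly increasing on a finite set of
  rationals. Such a map extends to a shifting \<rho> (adding one point at a time by a piecewise affine
  stretch), and \<rho> witnesses that the lowering is congruent. *)

lemma strict_mono_on_eq_if_image_eq:
  fixes f g :: "'a::linorder \<Rightarrow> 'b::linorder"
  assumes "finite A" "strict_mono_on A f" "strict_mono_on A g" "f ` A = g ` A" "x \<in> A"
  shows "f x = g x"
  using assms
proof (induction A arbitrary: x rule: finite_linorder_max_induct)
  case empty
  then show ?case by simp
next
  case (insert b A)
  have f_below: "f a < f b" and g_below: "g a < g b" if "a \<in> A" for a
    using that insert.hyps(2) insert.prems(1,2) by (simp_all add: strict_mono_onD)
  have "\<forall>y \<in> f ` insert b A. y \<le> f b" "\<forall>y \<in> g ` insert b A. y \<le> g b"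
    using f_below g_below by (auto simp: less_imp_le)
  then have "Max (f ` insert b A) = f b" "Max (g ` insert b A) = g b"
    using insert.hyps(1) by (intro Max_eqI; auto)+
  then have fg_b: "f b = g b"
    using insert.prems(3) by simp
  have "f ` A = f ` insert b A - {f b}" "g ` A = g ` insert b A - {g b}"
    using f_below g_below by (auto simp: less_le)
  then have "f ` A = g ` A"
    using insert.prems(3) fg_b by metis
  moreover have "strict_mono_on A f" "strict_mono_on A g"
    using insert.prems(1,2) by (auto intro: monotone_on_subset)
  ultimately show ?case
    using insert.IH insert.prems(4) fg_b by blast
qed

definition stretch :: "'a::linordered_field \<Rightarrow> 'a \<Rightarrow> 'a \<Rightarrow> 'a \<Rightarrow> 'a" where
  "stretch c u v x = (if x \<le> c then x else c + (x - c) * (v - c) / (u - c))"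

lemma stretch_below: "x \<le> c \<Longrightarrow> stretch c u v x = x"
  by (simp add: stretch_def)

lemma stretch_at: "c < u \<Longrightarrow> stretch c u v u = v"
  by (simp add: stretch_def)

lemma stretch_stretch:
  assumes "c < u" "c < v"
  shows "stretch c v u (stretch c u v x) = x"
proof (cases "x \<le> c")
  case True
  then show ?thesis by (simp add: stretch_def)
next
  case False
  define y where "y = c + (x - c) * (v - c) / (u - c)"
  have "0 < (x - c) * (v - c) / (u - c)"
    using False assms by (simp add: zero_less_mult_iff)
  then have "\<not> y \<le> c"
    by (simp add: y_def)
  moreover have "(y - c) * (u - c) / (v - c) = x - c"
    using assms by (simp add: y_def)
  ultimately show ?thesis
    using False by (simp add: stretch_def y_def[symmetric])
qed

lemma strict_mono_stretch:
  assumes "c < u" "c < v"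
  shows "strict_mono (stretch c u v)"
proof (rule strict_monoI)
  fix x y :: 'a
  assume "x < y"
  have "(x - c) * (v - c) / (u - c) < (y - c) * (v - c) / (u - c)"
    using \<open>x < y\<close> assms by (simp add: divide_strict_right_mono)
  moreover have "0 < (y - c) * (v - c) / (u - c)" if "c < y"
    using that assms by simp
  ultimately show "stretch c u v x < stretch c u v y"
    using \<open>x < y\<close> by (auto simp: stretch_def)
qed

lemma shifting_strict_mono_on: "shifting \<pi> \<Longrightarrow> strict_mono_on A \<pi>"
  by (simp add: shifting_def monotone_on_subset[OF _ subset_UNIV])

lemma shifting_id: "shifting id"
  by (simp add: shifting_def strict_mono_def)

lemma shifting_comp: "shifting \<pi> \<Longrightarrow> shifting \<rho> \<Longrightarrow> shifting (\<rho> \<circ> \<pi>)"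
  by (auto simp: shifting_def strict_mono_def intro: bij_comp)

lemma shifting_translation: "shifting (\<lambda>x. x + d)"
proof -
  have "bij (\<lambda>x::rat. x + d)"
    by (rule o_bij[where g = "\<lambda>x. x - d"]) (auto simp: fun_eq_iff)
  then show ?thesis
    by (simp add: shifting_def strict_mono_def)
qed

lemma shifting_stretch:
  assumes "c < u" "c < v"
  shows "shifting (stretch c u v)"
proof -
  have "bij (stretch c u v)"
    by (rule o_bij[where g = "stretch c v u"]) (auto simp: fun_eq_iff stretch_stretch assms)
  then show ?thesis
    using strict_mono_stretch[OF assms] by (simp add: shifting_def)
qed

lemma shifting_extends_strict_mono_on:
  fixes f :: "rat \<Rightarrow> rat"
  assumes "finite S" "strict_mono_on S f"
  shows "\<exists>\<rho>. shifting \<rho> \<and> (\<forall>x\<in>S. \<rho> x = f x)"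
  using assms
proof (induction S rule: finite_linorder_max_induct)
  case empty
  then show ?case
    using shifting_id by blast
next
  case (insert b A)
  then obtain \<rho> where \<rho>: "shifting \<rho>" "\<forall>x\<in>A. \<rho> x = f x"
    by (auto intro: monotone_on_subset)
  show ?case
  proof (cases "A = {}")
    case True
    then show ?thesis
      using shifting_translation[of "f b - b"] by auto
  next
    case False
    define c where "c = f (Max A)"
    have "Max A \<in> A" "Max A < b"
      using False insert.hyps by auto
    then have \<rho>_max: "\<rho> (Max A) = c" and c_below_f: "c < f b"
      using \<rho>(2) insert.prems by (auto simp: c_def dest: strict_mono_onD)
    have c_below_\<rho>: "c < \<rho> b"
      using \<rho>(1) \<open>Max A < b\<close> \<rho>_max by (auto simp: shifting_def dest: strict_monoD)
    have f_le_c: "f a \<le> c" if "a \<in> A" for a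
    proof -
      have "a \<le> Max A"
        using that insert.hyps(1) by simp
      then show ?thesis
        using strict_mono_on_leD[OF insert.prems] that \<open>Max A \<in> A\<close> by (simp add: c_def)
    qed
    define \<rho>' where "\<rho>' = stretch c (\<rho> b) (f b) \<circ> \<rho>"
    have "shifting \<rho>'"
      unfolding \<rho>'_def by (intro shifting_comp \<rho>(1) shifting_stretch c_below_\<rho> c_below_f)
    moreover have "\<rho>' x = f x" if "x \<in> insert b A" for x
    proof (cases "x = b")
      case True
      then show ?thesis
        using c_below_\<rho> by (simp add: \<rho>'_def stretch_at)
    next
      case False
      then show ?thesis
        using that \<rho>(2) f_le_c by (simp add: \<rho>'_def stretch_below)
    qed
    ultimately show ?thesis
      by blast
  qed
qed

lemma prios_subst_pg [simp]: "prios (subst_pg G \<sigma>) = prios G"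
  by (force simp: prios_def subst_pg_def)

lemma prios_shift_pg [simp]: "prios (shift_pg G \<pi>) = \<pi> ` prios G"
  by (force simp: prios_def shift_pg_def)

lemma prios_Un [simp]: "prios (F \<union> G) = prios F \<union> prios G"
  by (simp add: prios_def image_Un)

lemma finite_prios: "pgoal G \<Longrightarrow> finite (prios G)"
  by (simp add: pgoal_def prios_def)

lemma shift_pg_shift_pg: "shift_pg (shift_pg G \<pi>) \<rho> = shift_pg G (\<rho> \<circ> \<pi>)"
  by (force simp: shift_pg_def image_iff)

lemma shift_pg_cong: "(\<And>p. p \<in> prios G \<Longrightarrow> \<pi> p = \<rho> p) \<Longrightarrow> shift_pg G \<pi> = shift_pg G \<rho>"
  by (force simp: shift_pg_def prios_def image_iff)

definition step_body :: "('p, 'f, 'v) pstep \<Rightarrow> ('p, 'f, 'v) pgoal" where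
  "step_body D = shift_pg (subst_pg (snd (st_clause D)) (st_ren D)) (st_shift D)"

lemma stack_queue_placement:
  assumes \<pi>: "shifting \<pi>" and \<gamma>: "shifting \<gamma>" and fin: "finite (prios (Ms \<union> Mq))"
    and disj: "no_common K (shift_pg (subst_pg (Ms \<union> Mq) \<xi>) \<pi>)"
    and res: "subst_pg (K \<union> shift_pg (subst_pg (Ms \<union> Mq) \<xi>) \<pi>) \<theta>
            = subst_pg (shift_pg (subst_pg Ms \<xi>) \<gamma> \<union> K \<union> shift_pg (subst_pg Mq \<xi>) \<gamma>) \<theta>"
    and below: "before (shift_pg (subst_pg Ms \<xi>) \<gamma>) K"
    and above: "before K (shift_pg (subst_pg Mq \<xi>) \<gamma>)"
  shows "before (shift_pg Ms \<pi>) K \<and> before K (shift_pg Mq \<pi>)"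
proof -
  let ?P = "prios (Ms \<union> Mq)"
  have "prios K \<union> \<pi> ` ?P = prios K \<union> \<gamma> ` ?P"
    using arg_cong[OF res, of prios] by (simp add: image_Un Un_ac)
  moreover have "prios K \<inter> \<pi> ` ?P = {}"
    using disj by (simp add: no_common_def)
  moreover have "prios K \<inter> \<gamma> ` ?P = {}"
    using below above by (fastforce simp: before_def)
  ultimately have "\<pi> ` ?P = \<gamma> ` ?P"
    by blast
  then have "\<pi> p = \<gamma> p" if "p \<in> ?P" for p
    using strict_mono_on_eq_if_image_eq[OF fin] shifting_strict_mono_on \<pi> \<gamma> that by blast
  then show ?thesis
    using below above by (simp add: before_def)
qed

lemma shifting_transport:
  assumes fin: "finite (prios K)" "finite (prios (Ms \<union> Mq))"
    and \<pi>\<^sub>1: "shifting \<pi>\<^sub>1" and \<pi>\<^sub>2: "shifting \<pi>\<^sub>2" and \<sigma>: "shifting \<sigma>"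
    and below\<^sub>1: "before (shift_pg Ms \<pi>\<^sub>1) K" and above\<^sub>1: "before K (shift_pg Mq \<pi>\<^sub>1)"
    and below\<^sub>2: "before (shift_pg Ms \<pi>\<^sub>2) (shift_pg K \<sigma>)"
    and above\<^sub>2: "before (shift_pg K \<sigma>) (shift_pg Mq \<pi>\<^sub>2)"
  obtains \<rho> where "shifting \<rho>" "shift_pg K \<rho> = shift_pg K \<sigma>"
    "shift_pg (shift_pg (Ms \<union> Mq) \<pi>\<^sub>1) \<rho> = shift_pg (Ms \<union> Mq) \<pi>\<^sub>2"
proof -
  let ?Q = "prios K" and ?P = "prios (Ms \<union> Mq)"
  define S where "S = ?Q \<union> \<pi>\<^sub>1 ` ?P"
  define h where "h x = (if x \<in> ?Q then \<sigma> x else \<pi>\<^sub>2 (inv \<pi>\<^sub>1 x))" for x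
  have stack\<^sub>1: "\<pi>\<^sub>1 p < k" and stack\<^sub>2: "\<pi>\<^sub>2 p < \<sigma> k" if "p \<in> prios Ms" "k \<in> ?Q" for p k
    using that below\<^sub>1 below\<^sub>2 by (simp_all add: before_def)
  have queue\<^sub>1: "k < \<pi>\<^sub>1 p" and queue\<^sub>2: "\<sigma> k < \<pi>\<^sub>2 p" if "p \<in> prios Mq" "k \<in> ?Q" for p k
    using that above\<^sub>1 above\<^sub>2 by (simp_all add: before_def)
  have h_Q: "h k = \<sigma> k" if "k \<in> ?Q" for k
    using that by (simp add: h_def)
  have h_P: "h (\<pi>\<^sub>1 p) = \<pi>\<^sub>2 p" if "p \<in> ?P" for p
  proof -
    have "\<pi>\<^sub>1 p \<notin> ?Q"
      using that stack\<^sub>1 queue\<^sub>1 by fastforce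
    moreover have "inv \<pi>\<^sub>1 (\<pi>\<^sub>1 p) = p"
      using \<pi>\<^sub>1 by (simp add: shifting_def bij_is_inj)
    ultimately show ?thesis
      by (simp add: h_def)
  qed
  have "strict_mono_on S h"
  proof (rule strict_mono_onI)
    fix x y
    assume "x \<in> S" "y \<in> S" "x < y"
    then consider (QQ) "x \<in> ?Q" "y \<in> ?Q"
      | (QP) q where "x \<in> ?Q" "q \<in> ?P" "y = \<pi>\<^sub>1 q"
      | (PQ) p where "p \<in> ?P" "x = \<pi>\<^sub>1 p" "y \<in> ?Q"
      | (PP) p q where "p \<in> ?P" "q \<in> ?P" "x = \<pi>\<^sub>1 p" "y = \<pi>\<^sub>1 q"
      by (auto simp: S_def)
    then show "h x < h y"
    proof cases
      case QQ
      then show ?thesis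
        using \<sigma> \<open>x < y\<close> by (simp add: h_Q shifting_def strict_monoD)
    next
      case QP
      then have "q \<in> prios Mq"
        using stack\<^sub>1[of q x] \<open>x < y\<close> by auto
      then show ?thesis
        using QP queue\<^sub>2 by (simp add: h_Q h_P)
    next
      case PQ
      then have "p \<in> prios Ms"
        using queue\<^sub>1[of p y] \<open>x < y\<close> by auto
      then show ?thesis
        using PQ stack\<^sub>2 by (simp add: h_Q h_P)
    next
      case PP
      then have "p < q"
        using \<pi>\<^sub>1 \<open>x < y\<close> by (simp add: shifting_def strict_mono_less)
      then show ?thesis
        using PP \<pi>\<^sub>2 by (simp add: h_P shifting_def strict_monoD)
    qed
  qed
  moreover have "finite S"
    using fin by (simp add: S_def)
  ultimately obtain \<rho> where \<rho>: "shifting \<rho>" "\<forall>x\<in>S. \<rho> x = h x"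
    using shifting_extends_strict_mono_on by blast
  have "shift_pg K \<rho> = shift_pg K \<sigma>"
    using \<rho>(2) by (intro shift_pg_cong) (simp add: S_def h_Q)
  moreover have "shift_pg (shift_pg (Ms \<union> Mq) \<pi>\<^sub>1) \<rho> = shift_pg (Ms \<union> Mq) \<pi>\<^sub>2"
    unfolding shift_pg_shift_pg using \<rho>(2) by (intro shift_pg_cong) (simp add: S_def h_P)
  ultimately show ?thesis
    using that \<rho>(1) by blast
qed

lemma stack_queue_typeE:
  assumes "stack_queue_type SQ" "pgoal (snd c)"
  obtains Ms Mq where "snd c = Ms \<union> Mq"
    "\<And>D a K. D \<in> SQ \<Longrightarrow> st_clause D = c \<Longrightarrow> st_goal D = insert a K \<Longrightarrow> before {a} K
      \<Longrightarrow> shifting (st_shift D) \<Longrightarrow> no_common K (step_body D)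
      \<Longrightarrow> st_res D = subst_pg (K \<union> step_body D) (st_mgu D)
      \<Longrightarrow> before (shift_pg Ms (st_shift D)) K \<and> before K (shift_pg Mq (st_shift D))"
proof -
  obtain Ms Mq where B: "snd c = Ms \<union> Mq"
    and placed: "\<forall>D\<in>SQ. \<forall>a K. st_clause D = c \<and> st_goal D = insert a K \<and> before {a} K \<longrightarrow>
               (\<exists>\<gamma>. shifting \<gamma>
                  \<and> before (shift_pg (subst_pg Ms (st_ren D)) \<gamma>) K
                  \<and> before K (shift_pg (subst_pg Mq (st_ren D)) \<gamma>)
                  \<and> st_res D = subst_pg (shift_pg (subst_pg Ms (st_ren D)) \<gamma> \<union> K
                                         \<union> shift_pg (subst_pg Mq (st_ren D)) \<gamma>) (st_mgu D))"
    using assms unfolding stack_queue_type_def by metis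
  have fin: "finite (prios (Ms \<union> Mq))"
    using assms(2) B by (metis finite_prios)
  show ?thesis
  proof (rule that[OF B])
    fix D a K
    assume "D \<in> SQ" "st_clause D = c" "st_goal D = insert a K" "before {a} K"
      and \<pi>: "shifting (st_shift D)" and disj: "no_common K (step_body D)"
      and res: "st_res D = subst_pg (K \<union> step_body D) (st_mgu D)"
    with placed obtain \<gamma> where "shifting \<gamma>"
      "before (shift_pg (subst_pg Ms (st_ren D)) \<gamma>) K"
      "before K (shift_pg (subst_pg Mq (st_ren D)) \<gamma>)"
      "st_res D = subst_pg (shift_pg (subst_pg Ms (st_ren D)) \<gamma> \<union> K
                             \<union> shift_pg (subst_pg Mq (st_ren D)) \<gamma>) (st_mgu D)"
      by blast
    with \<pi> disj res fin show "before (shift_pg Ms (st_shift D)) K \<and> before K (shift_pg Mq (st_shift D))"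
      unfolding step_body_def \<open>st_clause D = c\<close> B
      by (intro stack_queue_placement[where \<xi> = "st_ren D" and \<theta> = "st_mgu D"]) simp_all
  qed
qed

lemma stack_queue_lowering_placements:
  assumes sq: "stack_queue_type SQ" and "D\<^sub>1 \<in> SQ" "D\<^sub>2 \<in> SQ"
    and step\<^sub>1: "is_step D\<^sub>1" and step\<^sub>2: "is_step D\<^sub>2" and W: "lowering_wit D\<^sub>1 D\<^sub>2 X a K lam \<sigma>"
  obtains Ms Mq where "snd (st_clause D\<^sub>1) = Ms \<union> Mq"
    "before (shift_pg Ms (st_shift D\<^sub>1)) K" "before K (shift_pg Mq (st_shift D\<^sub>1))"
    "before (shift_pg Ms (st_shift D\<^sub>2)) (shift_pg K \<sigma>)" "before (shift_pg K \<sigma>) (shift_pg Mq (st_shift D\<^sub>2))"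
proof -
  let ?K' = "shift_pg (subst_pg K lam) \<sigma>"
  have "st_clause D\<^sub>2 = st_clause D\<^sub>1"
    and goal\<^sub>1: "st_goal D\<^sub>1 = insert a K" "before {a} K"
    and goal\<^sub>2: "st_goal D\<^sub>2 = insert (subst_atom (fst a) lam, \<sigma> (snd a)) (?K' \<union> X)"
      "before {(subst_atom (fst a) lam, \<sigma> (snd a))} (?K' \<union> X)"
    and res\<^sub>1: "no_common K (step_body D\<^sub>1)" "st_res D\<^sub>1 = subst_pg (K \<union> step_body D\<^sub>1) (st_mgu D\<^sub>1)"
    and res\<^sub>2: "no_common (?K' \<union> X) (step_body D\<^sub>2)"
      "st_res D\<^sub>2 = subst_pg ((?K' \<union> X) \<union> step_body D\<^sub>2) (st_mgu D\<^sub>2)"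
    using W unfolding lowering_wit_def Let_def step_body_def by (simp_all add: Un_ac)
  have "pgoal (snd (st_clause D\<^sub>1))" "shifting (st_shift D\<^sub>1)" "shifting (st_shift D\<^sub>2)"
    using step\<^sub>1 step\<^sub>2 unfolding is_step_def by auto
  obtain Ms Mq where B: "snd (st_clause D\<^sub>1) = Ms \<union> Mq"
    and placed: "\<And>D a K. D \<in> SQ \<Longrightarrow> st_clause D = st_clause D\<^sub>1 \<Longrightarrow> st_goal D = insert a K
      \<Longrightarrow> before {a} K \<Longrightarrow> shifting (st_shift D) \<Longrightarrow> no_common K (step_body D)
      \<Longrightarrow> st_res D = subst_pg (K \<union> step_body D) (st_mgu D)
      \<Longrightarrow> before (shift_pg Ms (st_shift D)) K \<and> before K (shift_pg Mq (st_shift D))"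
    by (rule stack_queue_typeE[OF sq \<open>pgoal (snd (st_clause D\<^sub>1))\<close>]) (rule that)
  have "before (shift_pg Ms (st_shift D\<^sub>1)) K \<and> before K (shift_pg Mq (st_shift D\<^sub>1))"
    using placed[OF \<open>D\<^sub>1 \<in> SQ\<close> refl goal\<^sub>1 \<open>shifting (st_shift D\<^sub>1)\<close> res\<^sub>1] .
  moreover have "before (shift_pg Ms (st_shift D\<^sub>2)) (?K' \<union> X) \<and> before (?K' \<union> X) (shift_pg Mq (st_shift D\<^sub>2))"
    using placed[OF \<open>D\<^sub>2 \<in> SQ\<close> \<open>st_clause D\<^sub>2 = st_clause D\<^sub>1\<close> goal\<^sub>2 \<open>shifting (st_shift D\<^sub>2)\<close> res\<^sub>2] .
  then have "before (shift_pg Ms (st_shift D\<^sub>2)) (shift_pg K \<sigma>) \<and> before (shift_pg K \<sigma>) (shift_pg Mq (st_shift D\<^sub>2))"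
    by (simp add: before_def)
  ultimately show ?thesis
    using that B by blast
qed

lemma stack_queue_lowering_congruent:
  assumes sq: "stack_queue_type SQ" and "D\<^sub>1 \<in> SQ" "D\<^sub>2 \<in> SQ"
    and step\<^sub>1: "is_step D\<^sub>1" and step\<^sub>2: "is_step D\<^sub>2" and "lowering D\<^sub>1 D\<^sub>2 X"
  shows "cong_lowering D\<^sub>1 D\<^sub>2 X"
proof -
  obtain a K lam \<sigma> where W: "lowering_wit D\<^sub>1 D\<^sub>2 X a K lam \<sigma>"
    using \<open>lowering D\<^sub>1 D\<^sub>2 X\<close> unfolding lowering_def by blast
  obtain Ms Mq where B: "snd (st_clause D\<^sub>1) = Ms \<union> Mq"
    and placed: "before (shift_pg Ms (st_shift D\<^sub>1)) K" "before K (shift_pg Mq (st_shift D\<^sub>1))"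
      "before (shift_pg Ms (st_shift D\<^sub>2)) (shift_pg K \<sigma>)" "before (shift_pg K \<sigma>) (shift_pg Mq (st_shift D\<^sub>2))"
    by (rule stack_queue_lowering_placements[OF assms(1-5) W])
  have K: "pgoal K" and \<sigma>: "shifting \<sigma>"
    using W unfolding lowering_wit_def Let_def by simp_all
  have body: "pgoal (Ms \<union> Mq)" and \<pi>\<^sub>1: "shifting (st_shift D\<^sub>1)" and \<pi>\<^sub>2: "shifting (st_shift D\<^sub>2)"
    using step\<^sub>1 step\<^sub>2 unfolding is_step_def B[symmetric] by auto
  obtain \<rho> where "shifting \<rho>" "shift_pg K \<rho> = shift_pg K \<sigma>"
      "shift_pg (shift_pg (snd (st_clause D\<^sub>1)) (st_shift D\<^sub>1)) \<rho> = shift_pg (snd (st_clause D\<^sub>1)) (st_shift D\<^sub>2)"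
    unfolding B by (rule shifting_transport[OF finite_prios[OF K] finite_prios[OF body] \<pi>\<^sub>1 \<pi>\<^sub>2 \<sigma> placed])
  with W show ?thesis
    unfolding cong_lowering_def by blast
qed

theorem mainTheorem10:
  fixes SQ :: "('p, 'f, 'v) pstep set"
  assumes steps: "\<forall>D\<in>SQ. is_step D"
    and sq: "stack_queue_type SQ"
  shows "(\<forall>D1\<in>SQ. \<forall>D2\<in>SQ. \<forall>X. lowering D1 D2 X \<longrightarrow> cong_lowering D1 D2 X)
         \<and> spec_independent SQ
         \<and> (complete SQ \<longrightarrow> spec_indep_scheduling_rule SQ)"
proof -
  have "\<forall>D1\<in>SQ. \<forall>D2\<in>SQ. \<forall>X. lowering D1 D2 X \<longrightarrow> cong_lowering D1 D2 X"
    using stack_queue_lowering_congruent[OF sq] steps by blast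
  then show ?thesis
    by (simp add: spec_independent_def spec_indep_scheduling_rule_def)
qed

end
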